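(* Let $n\ge1$ and let $\sigma\in S_n\le B_n$ have disjoint cycle decomposition (including fixed points as cycles of length $1$) \[ C_1=(i_{1,1}\,\dots\,i_{1,d_1}),\ \dots,\ C_j=(i_{j,1}\,\dots\,i_{j,d_j}),\qquad \sum_{r=1}^j d_r=n. \] Let $\tau\in C_{B_n}(\sigma)$. Then there exist a unique $\tau'\in C_{S_n}(\sigma)$ and unique $\lambda_1,\dots,\lambda_j\in\mathbb Z/2\mathbb Z$ such that \[ \tau=\tau' v,\qquad v=\sum_{r=1}^j\lambda_r\,(e_{i_{r,1}}+\dots+e_{i_{r,d_r}}), \] and moreover \[ \phi(\sigma,\tau)=\epsilon^{\sum_{r=1}^j\lambda_r(d_r-1)}. \]
   Context: $B_n=(\mathbb Z/2\mathbb Z)^n\rtimes S_n$ is the hyperoctahedral group, $S_n$ acting by permuting coordinates; $e_i$ is the $i$th unit vector of $(\mathbb Z/2\mathbb Z)^n$; $C_{B_n}(\sigma)$ and $C_{S_n}(\sigma)$ denote centralizers. $H_n$ is the set of pairs $(a,b)\in(\mathbb Z/2\mathbb Z)^n\times\mathbb Z/2\mathbb Z$ with group law $(a_1,b_1)(a_2,b_2)=(a_1+a_2,\ b_1+b_2+\sum_{1\le i<j\le n}a_{1,i}a_{2,j})$; put $x_i=(e_i,0)$ and $\epsilon=(0,1)$. $S_n$ acts on $H_n$ by automorphisms via $\sigma(x_i)=x_{\sigma(i)}$, $\sigma(\epsilon)=\epsilon$, and $G_n=H_n\rtimes S_n$ (with $\sigma h\sigma^{-1}=\sigma(h)$). The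 element $\epsilon$ is central in $G_n$ and $G_n/\{1,\epsilon\}\cong B_n$ (via $x_i\mapsto e_i$, $\sigma\mapsto\sigma$). For commuting $\sigma,\tau\in B_n$ with lifts $\widetilde\sigma,\widetilde\tau\in G_n$, define $\phi(\sigma,\tau)=\widetilde\sigma\widetilde\tau\widetilde\sigma^{-1}\widetilde\tau^{-1}\in\langle\epsilon\rangle$, which is independent of the choice of lifts. *)

theory Defs
  imports "HOL-Combinatorics.Permutations" "HOL-Combinatorics.Orbits"
begin

text \<open>Indices are 0-based: the coordinate set is {..<n} (paper: {1..n}).
  Vectors of (Z/2Z)^n are functions nat => bool vanishing outside {..<n};
  addition is exclusive or. Permutations in S_n are functions nat => nat
  that permute {..<n} (identity outside).\<close>

type_synonym vec = "nat \<Rightarrow> bool"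
type_synonym perm = "nat \<Rightarrow> nat"

definition vadd :: "vec \<Rightarrow> vec \<Rightarrow> vec" where
  "vadd u v = (\<lambda>i. u i \<noteq> v i)"

definition zvec :: vec where
  "zvec = (\<lambda>_. False)"

definition unitv :: "nat \<Rightarrow> vec" where
  "unitv i = (\<lambda>j. j = i)"

text \<open>S_n acts on (Z/2Z)^n by permuting coordinates: pi(e_i) = e_(pi i).\<close>
definition pact :: "perm \<Rightarrow> vec \<Rightarrow> vec" where
  "pact p v = (\<lambda>i. v (inv p i))"

text \<open>An element (v, p) stands for the product v p.\<close>
definition Bcarrier :: "nat \<Rightarrow> (vec \<times> perm) set" where
  "Bcarrier n = {(v, p). p permutes {..<n} \<and> (\<forall>i\<ge>n. \<not> v i)}"

definition Bmul :: "vec \<times> perm \<Rightarrow> vec \<times> perm \<Rightarrow> vec \<times> perm" where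
  "Bmul x y = (vadd (fst x) (pact (snd x) (fst y)), snd x \<circ> snd y)"

definition Bperm :: "perm \<Rightarrow> vec \<times> perm" where
  "Bperm p = (zvec, p)"

definition Bvec :: "vec \<Rightarrow> vec \<times> perm" where
  "Bvec v = (v, id)"

type_synonym helt = "vec \<times> bool"

definition Hmul :: "nat \<Rightarrow> helt \<Rightarrow> helt \<Rightarrow> helt" where
  "Hmul n x y = (vadd (fst x) (fst y),
     (snd x \<noteq> snd y) \<noteq> odd (card {(i, j). i < j \<and> j < n \<and> fst x i \<and> fst y j}))"

definition Hinv :: "nat \<Rightarrow> helt \<Rightarrow> helt" where
  "Hinv n x = (fst x, snd x \<noteq> odd (card {(i, j). i < j \<and> j < n \<and> fst x i \<and> fst x j}))"

text \<open>generators x_i = (e_i, 0) and epsilon = (0, 1)\<close>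
definition xgen :: "nat \<Rightarrow> helt" where
  "xgen i = (unitv i, False)"

text \<open>Action of S_n on H_n by the automorphism determined by
  p(x_i) = x_(p i), p(epsilon) = epsilon: writing
  (a, b) = epsilon^b x_(i_k) ... x_(i_1) with i_1 < ... < i_k the support of a,
  its image is epsilon^b x_(p i_k) ... x_(p i_1).\<close>
definition Hact :: "nat \<Rightarrow> perm \<Rightarrow> helt \<Rightarrow> helt" where
  "Hact n p h = foldl (Hmul n) (zvec, snd h)
      (map (\<lambda>i. xgen (p i)) (rev (filter (fst h) [0..<n])))"

type_synonym gelt = "helt \<times> perm"

definition Gmul :: "nat \<Rightarrow> gelt \<Rightarrow> gelt \<Rightarrow> gelt" where
  "Gmul n x y = (Hmul n (fst x) (Hact n (snd x) (fst y)), snd x \<circ> snd y)"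

definition Ginv :: "nat \<Rightarrow> gelt \<Rightarrow> gelt" where
  "Ginv n x = (Hact n (inv (snd x)) (Hinv n (fst x)), inv (snd x))"

definition Geps :: "nat \<Rightarrow> gelt" where
  "Geps k = ((zvec, odd k), id)"

text \<open>A lift of (v, p) in B_n to G_n (the quotient map sends x_i to e_i, p to p).\<close>
definition lift :: "vec \<times> perm \<Rightarrow> gelt" where
  "lift x = ((fst x, False), snd x)"

text \<open>phi(s, t) = s~ t~ s~^-1 t~^-1 for lifts s~, t~ (independent of the lifts).\<close>
definition phi :: "nat \<Rightarrow> vec \<times> perm \<Rightarrow> vec \<times> perm \<Rightarrow> gelt" where
  "phi n s t = Gmul n (Gmul n (Gmul n (lift s) (lift t)) (Ginv n (lift s))) (Ginv n (lift t))"

definition cycles_of :: "nat \<Rightarrow> perm \<Rightarrow> nat set set" where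
  "cycles_of n p = (\<lambda>i. orbit p i) ` {..<n}"

text \<open>v = sum over cycles C of lam(C) times (sum of e_i over i in C)\<close>
definition cycvec :: "nat \<Rightarrow> perm \<Rightarrow> (nat set \<Rightarrow> bool) \<Rightarrow> vec" where
  "cycvec n p lam = (\<lambda>i. i < n \<and> lam (orbit p i))"

end

theory Submission
  imports Defs "HOL-Combinatorics.Cycles"
begin

text \<open>If \<tau> = (v, p) commutes with \<sigma>, then p commutes with \<sigma> and v is constant on the cycles
  of \<sigma>; hence \<tau> = p w with w = p\<inverse>(v) also constant on cycles, and the \<lambda>_r are the values
  of w. In G_n a permutation p acts on a lift (a, 0) of a vector by (p a, \<epsilon>^k), where k counts the
  inversions of p on the support of a. As \<sigma> fixes v, the commutator \<phi>(\<sigma>, \<tau>) is \<epsilon>^k for the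
  inversions of \<sigma> on the support of v, a union of cycles of \<sigma>. The parity of inversions is
  multiplicative and a cycle of length d is a product of d - 1 transpositions, each with an odd
  number of inversions, so k \<equiv> \<Sum> \<lambda>_r (d_r - 1) mod 2.\<close>

section \<open>Parity of inversions\<close>

lemma odd_card_filter_xor:
  assumes "finite A"
  shows "odd (card {x\<in>A. P x \<noteq> Q x}) = (odd (card {x\<in>A. P x}) \<noteq> odd (card {x\<in>A. Q x}))"
proof -
  have fin: "finite {x\<in>A. R x}" for R using assms by auto
  have "card {x\<in>A. P x} = card {x\<in>A. P x \<and> Q x} + card {x\<in>A. P x \<and> \<not> Q x}"
    by (subst card_Un_disjoint[symmetric]) (auto intro: fin arg_cong[where f=card])
  moreover have "card {x\<in>A. Q x} = card {x\<in>A. P x \<and> Q x} + card {x\<in>A. \<not> P x \<and> Q x}"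
    by (subst card_Un_disjoint[symmetric]) (auto intro: fin arg_cong[where f=card])
  moreover have "card {x\<in>A. P x \<noteq> Q x} = card {x\<in>A. P x \<and> \<not> Q x} + card {x\<in>A. \<not> P x \<and> Q x}"
    by (subst card_Un_disjoint[symmetric]) (auto intro: fin arg_cong[where f=card])
  ultimately show ?thesis by auto
qed

definition inversions :: "'a::linorder set \<Rightarrow> ('a \<Rightarrow> 'a) \<Rightarrow> ('a \<times> 'a) set" where
  "inversions T p = {(i, j). i \<in> T \<and> j \<in> T \<and> i < j \<and> p j < p i}"

definition inversion_parity :: "'a::linorder set \<Rightarrow> ('a \<Rightarrow> 'a) \<Rightarrow> bool" where
  "inversion_parity T p = odd (card (inversions T p))"

lemma inversion_parity_id [simp]: "inversion_parity T id = False"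
proof -
  have "inversions T id = {}" by (auto simp: inversions_def)
  then show ?thesis by (simp add: inversion_parity_def)
qed

lemma inversion_parity_cong:
  assumes "\<And>x. x \<in> T \<Longrightarrow> p x = q x"
  shows "inversion_parity T p = inversion_parity T q"
proof -
  have "inversions T p = inversions T q" using assms by (auto simp: inversions_def)
  then show ?thesis by (simp add: inversion_parity_def)
qed

text \<open>Sorting each pair reordered by q puts these pairs in bijection with the inversions of p.\<close>
lemma card_reordered_pairs_eq_card_inversions:
  assumes q: "q permutes T" and p: "inj p"
  shows "card {(i, j). i \<in> T \<and> j \<in> T \<and> i < j \<and> (p (q j) < p (q i)) \<noteq> (q j < q i)}
       = card (inversions T p)"
    (is "card ?R = _")
proof -
  define sort where "sort = (\<lambda>(i, j). (min (q i) (q j), max (q i) (q j)))"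
  have qinj: "inj q" using q permutes_inj by blast
  have "inj_on sort ?R"
  proof (rule inj_onI)
    fix x y assume "x \<in> ?R" "y \<in> ?R" "sort x = sort y"
    then obtain i j i' j' where x: "x = (i, j)" "i < j" and y: "y = (i', j')" "i' < j'"
      and e: "min (q i) (q j) = min (q i') (q j')" "max (q i) (q j) = max (q i') (q j')"
      by (auto simp: sort_def)
    have "q i \<noteq> q j" "q i' \<noteq> q j'" using x y qinj by (auto dest: injD)
    then have "(q i = q i' \<and> q j = q j') \<or> (q i = q j' \<and> q j = q i')"
      using e by (auto simp: min_def max_def split: if_splits)
    then have "(i = i' \<and> j = j') \<or> (i = j' \<and> j = i')" using qinj by (auto dest: injD)
    then show "x = y" using x y by auto
  qed
  moreover have "sort ` ?R = inversions T p"
  proof (intro equalityI subsetI)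
    fix z assume "z \<in> sort ` ?R"
    then obtain i j where ij: "i \<in> T" "j \<in> T" "i < j" "(p (q j) < p (q i)) \<noteq> (q j < q i)"
      and z: "z = sort (i, j)"
      by auto
    have "q i \<noteq> q j" using ij qinj by (auto dest: injD)
    moreover have "p (q i) \<noteq> p (q j)" using calculation p by (auto dest: injD)
    moreover have "q i \<in> T" "q j \<in> T" using ij q by (auto simp: permutes_in_image)
    ultimately show "z \<in> inversions T p" using ij z
      by (auto simp: inversions_def sort_def min_def max_def)
  next
    fix z assume "z \<in> inversions T p"
    then obtain a b where ab: "z = (a, b)" "a \<in> T" "b \<in> T" "a < b" "p b < p a"
      by (auto simp: inversions_def)
    define i j where "i = inv q a" and "j = inv q b"
    have qij: "q i = a" "q j = b" and T: "i \<in> T" "j \<in> T"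
      using q ab by (auto simp: i_def j_def permutes_inverses permutes_in_image permutes_inv)
    then have "i \<noteq> j" using ab by auto
    then consider "i < j" | "j < i" by (metis neqE)
    then show "z \<in> sort ` ?R"
    proof cases
      case 1
      then show ?thesis using ab qij T by (intro image_eqI[of _ _ "(i, j)"]) (auto simp: sort_def)
    next
      case 2
      then show ?thesis using ab qij T by (intro image_eqI[of _ _ "(j, i)"]) (auto simp: sort_def)
    qed
  qed
  ultimately show ?thesis using card_image by fastforce
qed

lemma inversion_parity_compose:
  assumes T: "finite T" and p: "p permutes T" and q: "q permutes T"
  shows "inversion_parity T (p \<circ> q) = (inversion_parity T p \<noteq> inversion_parity T q)"
proof -
  define P where "P = {(i, j). i \<in> T \<and> j \<in> T \<and> i < j}"
  define ordered_by_q where "ordered_by_q = (\<lambda>(i, j). q j < q i)"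
  define reordered_by_p where "reordered_by_p = (\<lambda>(i, j). (p (q j) < p (q i)) \<noteq> (q j < q i))"
  have fin: "finite P" unfolding P_def
    by (rule finite_subset[of _ "T \<times> T"]) (auto simp: T)
  have pq: "inversions T (p \<circ> q) = {x\<in>P. ordered_by_q x \<noteq> reordered_by_p x}"
    and q': "inversions T q = {x\<in>P. ordered_by_q x}"
    by (auto simp: inversions_def P_def ordered_by_q_def reordered_by_p_def)
  have "{x\<in>P. reordered_by_p x}
      = {(i, j). i \<in> T \<and> j \<in> T \<and> i < j \<and> (p (q j) < p (q i)) \<noteq> (q j < q i)}"
    by (auto simp: P_def reordered_by_p_def)
  then have p': "card {x\<in>P. reordered_by_p x} = card (inversions T p)"
    using card_reordered_pairs_eq_card_inversions[OF q permutes_inj[OF p]] by simp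
  show ?thesis
    unfolding inversion_parity_def pq q' odd_card_filter_xor[OF fin] p' by blast
qed

lemma inversion_parity_transpose:
  assumes T: "finite T" and ab: "a \<in> T" "b \<in> T" "a \<noteq> b"
  shows "inversion_parity T (transpose a b)"
proof -
  have main: "inversion_parity T (transpose a b)" if ab: "a \<in> T" "b \<in> T" "a < b" for a b
  proof -
    define M where "M = {k\<in>T. a < k \<and> k < b}"
    have fM: "finite M" using T by (auto simp: M_def)
    have e: "inversions T (transpose a b) = insert (a, b) ((\<lambda>k. (a, k)) ` M \<union> (\<lambda>k. (k, b)) ` M)"
      using ab by (auto simp: inversions_def M_def transpose_def split: if_splits)
    have "card ((\<lambda>k. (a, k)) ` M \<union> (\<lambda>k. (k, b)) ` M) = card M + card M"
      using fM by (subst card_Un_disjoint) (auto simp: card_image inj_on_def M_def)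
    moreover have "(a, b) \<notin> (\<lambda>k. (a, k)) ` M \<union> (\<lambda>k. (k, b)) ` M" by (auto simp: M_def)
    ultimately show ?thesis using fM by (simp add: e inversion_parity_def)
  qed
  from ab consider "a < b" | "b < a" by (metis neqE)
  then show ?thesis
    using main[of a b] main[of b a] ab by cases (simp_all add: transpose_commute)
qed

lemma inversion_parity_cycle_of_list:
  "finite T \<Longrightarrow> distinct cs \<Longrightarrow> set cs \<subseteq> T \<Longrightarrow>
    inversion_parity T (cycle_of_list cs) = odd (length cs - 1)"
proof (induction cs rule: cycle_of_list.induct)
  case (1 i j cs)
  have "transpose i j permutes T" using 1 by (auto intro: permutes_swap_id)
  moreover have "cycle_of_list (j # cs) permutes T"
    using cycle_permutes[of "j # cs"] 1 by (auto intro: permutes_subset)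
  ultimately have "inversion_parity T (cycle_of_list (i # j # cs))
      = (inversion_parity T (transpose i j) \<noteq> inversion_parity T (cycle_of_list (j # cs)))"
    using inversion_parity_compose[OF \<open>finite T\<close>] by simp
  also have "\<dots> = odd (length (i # j # cs) - 1)"
    using 1 inversion_parity_transpose[of T i j] by simp
  finally show ?case .
qed auto

lemma card_inversions_inv:
  assumes "bij p"
  shows "card (inversions (inv p ` T) p) = card (inversions T (inv p))"
proof -
  have pinv [simp]: "inv p (p x) = x" "p (inv p x) = x" for x
    using assms by (simp_all add: bij_is_inj inv_f_f bij_is_surj surj_f_inv_f)
  have "inversions (inv p ` T) p = (\<lambda>(i, j). (inv p j, inv p i)) ` inversions T (inv p)"
  proof (intro equalityI subsetI)
    fix z assume "z \<in> inversions (inv p ` T) p"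
    then obtain a b where z: "z = (a, b)" "a \<in> inv p ` T" "b \<in> inv p ` T" "a < b" "p b < p a"
      by (auto simp: inversions_def)
    then have "(p b, p a) \<in> inversions T (inv p)"
      by (auto simp: inversions_def)
    moreover have "z = (\<lambda>(i, j). (inv p j, inv p i)) (p b, p a)"
      using z by simp
    ultimately show "z \<in> (\<lambda>(i, j). (inv p j, inv p i)) ` inversions T (inv p)" by blast
  next
    fix z assume "z \<in> (\<lambda>(i, j). (inv p j, inv p i)) ` inversions T (inv p)"
    then show "z \<in> inversions (inv p ` T) p"
      by (auto simp: inversions_def)
  qed
  moreover have "inj_on (\<lambda>(i, j). (inv p j, inv p i)) (inversions T (inv p))"
    using bij_is_inj[OF bij_imp_bij_inv[OF assms]] by (auto simp: inj_on_def dest: injD)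
  ultimately show ?thesis by (simp add: card_image)
qed

section \<open>Orbits and cycles\<close>

lemma perm_restrict_permutes:
  assumes "inj f" "finite S" "f ` S \<subseteq> S"
  shows "perm_restrict f S permutes S"
proof (rule bij_imp_permutes)
  have "inj_on f S" using assms(1) by (rule inj_on_subset) simp
  moreover have "f ` S = S" using endo_inj_surj[OF assms(2,3) calculation] .
  ultimately have "bij_betw f S S" by (simp add: bij_betw_def)
  then show "bij_betw (perm_restrict f S) S S"
    by (rule bij_betw_cong[THEN iffD1, rotated]) (simp add: perm_restrict_simps)
qed (simp add: perm_restrict_simps)

lemma orbit_eq_of_mem:
  assumes "permutation f" "x \<in> orbit f a"
  shows "orbit f x = orbit f a"
  using orbit_cyclic_eq3[OF cyclic_on_orbit'[OF assms(1)] assms(2)] .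

lemma funpow_commute: "q \<circ> \<sigma> = \<sigma> \<circ> q \<Longrightarrow> q ((\<sigma> ^^ m) x) = (\<sigma> ^^ m) (q x)"
  by (induction m) (auto simp: fun_eq_iff)

lemma image_orbit_commute:
  assumes "permutation \<sigma>" "q \<circ> \<sigma> = \<sigma> \<circ> q"
  shows "q ` orbit \<sigma> x = orbit \<sigma> (q x)"
proof -
  have "(\<sigma> ^^ m) (q x) \<in> q ` {(\<sigma> ^^ n) x |n. True}" for m
    using funpow_commute[OF assms(2), of m x, symmetric] by blast
  then show ?thesis
    unfolding orbit_altdef_permutation[OF assms(1)] using funpow_commute[OF assms(2)] by auto
qed

lemma bij_betw_image_cycles_of:
  assumes \<sigma>: "\<sigma> permutes {..<n}" and q: "q permutes {..<n}" and comm: "q \<circ> \<sigma> = \<sigma> \<circ> q"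
  shows "bij_betw (image q) (cycles_of n \<sigma>) (cycles_of n \<sigma>)"
proof (rule bij_betw_imageI)
  have perm: "permutation \<sigma>" using \<sigma> permutation_permutes by blast
  show "inj_on (image q) (cycles_of n \<sigma>)"
    using permutes_inj[OF q] by (simp add: inj_on_def inj_image_eq_iff)
  have "image q ` cycles_of n \<sigma> = (\<lambda>i. orbit \<sigma> (q i)) ` {..<n}"
    unfolding cycles_of_def image_image image_orbit_commute[OF perm comm] ..
  also have "\<dots> = (\<lambda>i. orbit \<sigma> i) ` q ` {..<n}" by (simp only: image_image)
  finally show "image q ` cycles_of n \<sigma> = cycles_of n \<sigma>"
    by (simp only: permutes_image[OF q] cycles_of_def)
qed

lemma inv_commute:
  assumes p: "p permutes S" and comm: "p \<circ> \<sigma> = \<sigma> \<circ> p"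
  shows "inv p \<circ> \<sigma> = \<sigma> \<circ> inv p"
proof
  fix x
  have "inv p (\<sigma> x) = inv p (\<sigma> (p (inv p x)))" using p by (simp add: permutes_inverses)
  also have "\<dots> = inv p (p (\<sigma> (inv p x)))" using comm by (metis comp_apply)
  also have "\<dots> = \<sigma> (inv p x)" using p by (simp add: permutes_inverses)
  finally show "(inv p \<circ> \<sigma>) x = (\<sigma> \<circ> inv p) x" by simp
qed

lemma perm_restrict_orbit_eq_cycle_of_list:
  assumes "permutation f"
  shows "perm_restrict f (orbit f a) = cycle_of_list (support f a)"
proof
  have supp: "set (support f a) = orbit f a"
    using support_set[OF assms] orbit_altdef_permutation[OF assms] by auto
  fix x show "perm_restrict f (orbit f a) x = cycle_of_list (support f a) x"
    using cycle_restrict[OF assms, of x a] id_outside_supp[of x "support f a"]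
    unfolding supp by (cases "x \<in> orbit f a") (simp_all add: perm_restrict_simps)
qed

lemma inversion_parity_perm_restrict_Union_orbits:
  fixes \<sigma> :: "'a::linorder \<Rightarrow> 'a"
  assumes \<sigma>: "permutation \<sigma>"
  shows "finite \<C> \<Longrightarrow> \<C> \<subseteq> range (orbit \<sigma>) \<Longrightarrow> finite T \<Longrightarrow> \<Union>\<C> \<subseteq> T \<Longrightarrow>
    inversion_parity T (perm_restrict \<sigma> (\<Union>\<C>)) = odd (\<Sum>C\<in>\<C>. card C - 1)"
proof (induction \<C> rule: finite_induct)
  case empty
  have "inversion_parity T (perm_restrict \<sigma> {}) = inversion_parity T id"
    by (rule inversion_parity_cong) (simp add: perm_restrict_simps)
  then show ?case by simp
next
  case (insert C \<C>)
  obtain a where C: "C = orbit \<sigma> a" using insert.prems by auto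
  define S where "S = \<Union>\<C>"
  have "S \<inter> C = {}"
  proof (rule ccontr)
    assume "S \<inter> C \<noteq> {}"
    then obtain x D where "x \<in> C" "D \<in> \<C>" "x \<in> D" by (auto simp: S_def)
    moreover obtain b where "D = orbit \<sigma> b" using \<open>D \<in> \<C>\<close> insert.prems by auto
    ultimately show False
      using orbit_eq_of_mem[OF \<sigma>] insert.hyps(2) C by metis
  qed
  then have split: "perm_restrict \<sigma> (\<Union>(insert C \<C>)) = perm_restrict \<sigma> S \<circ> cycle_of_list (support \<sigma> a)"
    using perm_restrict_comp[OF _ cyclic_on_orbit'[OF \<sigma>], of S a]
    by (simp add: C S_def Un_commute perm_restrict_orbit_eq_cycle_of_list[OF \<sigma>])
  have dist: "distinct (support \<sigma> a)" using cycle_of_permutation[OF \<sigma>] .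
  have supp: "set (support \<sigma> a) = C"
    using support_set[OF \<sigma>] orbit_altdef_permutation[OF \<sigma>] C by auto
  have "\<sigma> ` S \<subseteq> S" using insert.prems by (auto simp: S_def intro: orbit.step)
  moreover have "inj \<sigma>" using \<sigma> by (simp add: permutation_bijective bij_is_inj)
  moreover have "finite S" using insert.prems finite_subset by (auto simp: S_def)
  ultimately have S_perm: "perm_restrict \<sigma> S permutes T"
    using perm_restrict_permutes[of \<sigma> S] insert.prems by (auto simp: S_def intro: permutes_subset)
  have C_perm: "cycle_of_list (support \<sigma> a) permutes T"
    using cycle_permutes[of "support \<sigma> a"] supp insert.prems by (auto intro: permutes_subset)
  have "inversion_parity T (perm_restrict \<sigma> (\<Union>(insert C \<C>)))
      = (inversion_parity T (perm_restrict \<sigma> S) \<noteq> inversion_parity T (cycle_of_list (support \<sigma> a)))"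
    unfolding split using insert.prems(2) S_perm C_perm by (rule inversion_parity_compose)
  also have "\<dots> = (odd (\<Sum>C\<in>\<C>. card C - 1) \<noteq> odd (card C - 1))"
    using insert.IH insert.prems inversion_parity_cycle_of_list[OF insert.prems(2) dist]
      distinct_card[OF dist] supp
    by (simp add: S_def)
  also have "\<dots> = odd (\<Sum>C\<in>insert C \<C>. card C - 1)"
    by (simp only: sum.insert[OF insert.hyps] odd_add) blast
  finally show ?case .
qed

lemma Union_orbits_cycvec:
  assumes \<sigma>: "\<sigma> permutes {..<n}"
  shows "\<Union>{C\<in>cycles_of n \<sigma>. \<mu> C} = {i. cycvec n \<sigma> \<mu> i}"
proof (intro equalityI subsetI)
  have perm: "permutation \<sigma>" using \<sigma> permutation_permutes by blast
  fix x
  show "x \<in> {i. cycvec n \<sigma> \<mu> i}" if "x \<in> \<Union>{C\<in>cycles_of n \<sigma>. \<mu> C}"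
  proof -
    from that obtain b where b: "b < n" "x \<in> orbit \<sigma> b" "\<mu> (orbit \<sigma> b)"
      by (auto simp: cycles_of_def)
    then have "x < n" using permutes_orbit_subset[OF \<sigma>] by blast
    then show ?thesis using b orbit_eq_of_mem[OF perm b(2)] by (simp add: cycvec_def)
  qed
  show "x \<in> \<Union>{C\<in>cycles_of n \<sigma>. \<mu> C}" if "x \<in> {i. cycvec n \<sigma> \<mu> i}"
    using that permutation_self_in_orbit[OF perm, of x] by (auto simp: cycles_of_def cycvec_def)
qed

lemma inversion_parity_cycvec:
  assumes \<sigma>: "\<sigma> permutes {..<n}"
  shows "inversion_parity {i. cycvec n \<sigma> \<mu> i} \<sigma>
       = odd (\<Sum>C\<in>cycles_of n \<sigma>. if \<mu> C then card C - 1 else 0)"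
proof -
  have perm: "permutation \<sigma>" using \<sigma> permutation_permutes by blast
  define \<C> where "\<C> = {C\<in>cycles_of n \<sigma>. \<mu> C}"
  have fin: "finite (cycles_of n \<sigma>)" by (simp add: cycles_of_def)
  have T: "{i. cycvec n \<sigma> \<mu> i} = \<Union>\<C>" using Union_orbits_cycvec[OF \<sigma>] by (simp add: \<C>_def)
  have "inversion_parity (\<Union>\<C>) \<sigma> = inversion_parity (\<Union>\<C>) (perm_restrict \<sigma> (\<Union>\<C>))"
    by (rule inversion_parity_cong) (simp add: perm_restrict_simps)
  also have "\<dots> = odd (\<Sum>C\<in>\<C>. card C - 1)"
  proof (rule inversion_parity_perm_restrict_Union_orbits[OF perm])
    show "finite \<C>" "\<C> \<subseteq> range (orbit \<sigma>)" using fin by (auto simp: \<C>_def cycles_of_def)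
    show "finite (\<Union>\<C>)" unfolding T[symmetric] by (rule finite_subset[of _ "{..<n}"]) (auto simp: cycvec_def)
  qed simp
  also have "(\<Sum>C\<in>\<C>. card C - 1) = (\<Sum>C\<in>cycles_of n \<sigma>. if \<mu> C then card C - 1 else 0)"
    unfolding \<C>_def by (rule sum.inter_filter[OF fin])
  finally show ?thesis by (simp add: T)
qed

section \<open>Computations in H_n and G_n\<close>

definition Hcocycle :: "nat \<Rightarrow> vec \<Rightarrow> vec \<Rightarrow> bool" where
  "Hcocycle n u w = odd (card {(i, j). i < j \<and> j < n \<and> u i \<and> w j})"

lemma Hmul_eq: "Hmul n x y = (vadd (fst x) (fst y), (snd x \<noteq> snd y) \<noteq> Hcocycle n (fst x) (fst y))"
  by (simp add: Hmul_def Hcocycle_def)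

lemma finite_ordered_pairs_below: "finite {(i, j). i < j \<and> j < (n::nat)}"
  by (rule finite_subset[of _ "{..<n} \<times> {..<n}"]) auto

lemma Hcocycle_vadd_left: "Hcocycle n (vadd u1 u2) w = (Hcocycle n u1 w \<noteq> Hcocycle n u2 w)"
proof -
  let ?P = "{(i, j). i < j \<and> j < n}"
  have "{(i, j). i < j \<and> j < n \<and> vadd u1 u2 i \<and> w j}
      = {x\<in>?P. (\<lambda>(i, j). u1 i \<and> w j) x \<noteq> (\<lambda>(i, j). u2 i \<and> w j) x}"
    by (auto simp: vadd_def)
  moreover have "{(i, j). i < j \<and> j < n \<and> u i \<and> w j} = {x\<in>?P. (\<lambda>(i, j). u i \<and> w j) x}" for u
    by auto
  ultimately show ?thesis
    unfolding Hcocycle_def using odd_card_filter_xor[OF finite_ordered_pairs_below] by simp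
qed

lemma Hcocycle_vadd_right: "Hcocycle n u (vadd w1 w2) = (Hcocycle n u w1 \<noteq> Hcocycle n u w2)"
proof -
  let ?P = "{(i, j). i < j \<and> j < n}"
  have "{(i, j). i < j \<and> j < n \<and> u i \<and> vadd w1 w2 j}
      = {x\<in>?P. (\<lambda>(i, j). u i \<and> w1 j) x \<noteq> (\<lambda>(i, j). u i \<and> w2 j) x}"
    by (auto simp: vadd_def)
  moreover have "{(i, j). i < j \<and> j < n \<and> u i \<and> w j} = {x\<in>?P. (\<lambda>(i, j). u i \<and> w j) x}" for w
    by auto
  ultimately show ?thesis
    unfolding Hcocycle_def using odd_card_filter_xor[OF finite_ordered_pairs_below] by simp
qed

lemma Hcocycle_zvec [simp]: "Hcocycle n zvec w = False" "Hcocycle n u zvec = False"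
  by (simp_all add: Hcocycle_def zvec_def)

lemma vadd_assoc: "vadd (vadd a b) c = vadd a (vadd b c)"
  by (auto simp: vadd_def)

lemma vadd_zvec [simp]: "vadd zvec a = a" "vadd a zvec = a"
  by (auto simp: vadd_def zvec_def)

lemma vadd_self [simp]: "vadd a a = zvec"
  by (auto simp: vadd_def zvec_def)

lemma Hmul_assoc: "Hmul n (Hmul n x y) z = Hmul n x (Hmul n y z)"
  by (simp add: Hmul_eq vadd_assoc Hcocycle_vadd_left Hcocycle_vadd_right) blast

lemma Hmul_one [simp]: "Hmul n (zvec, False) y = y" "Hmul n y (zvec, False) = y"
  by (simp_all add: Hmul_eq)

lemma foldl_Hmul: "foldl (Hmul n) acc xs = Hmul n acc (foldl (Hmul n) (zvec, False) xs)"
proof (induction xs arbitrary: acc)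
  case (Cons x xs)
  then show ?case by (metis Hmul_assoc Hmul_one(1) foldl_Cons)
qed simp

text \<open>Multiplying out x_(p i_k) \<dots> x_(p i_1) produces one factor \<epsilon> for each pair of the
  support whose order p reverses.\<close>
lemma foldl_Hmul_xgen:
  assumes p: "p permutes {..<n}" and m: "m \<le> n"
  shows "foldl (Hmul n) (zvec, False) (map (\<lambda>i. xgen (p i)) (rev (filter a [0..<m])))
       = (\<lambda>k. \<exists>i<m. a i \<and> p i = k, inversion_parity {i. i < m \<and> a i} p)"
  using m
proof (induction m)
  case 0
  have "inversions {} p = {}" by (simp add: inversions_def)
  then show ?case by (simp add: zvec_def inversion_parity_def)
next
  case (Suc m)
  have pinj: "inj p" using p permutes_inj by blast
  define V where "V = (\<lambda>k. \<exists>i<m. a i \<and> p i = k)"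
  define I where "I = inversions {i. i < m \<and> a i} p"
  define W where "W = {i. i < m \<and> a i \<and> p m < p i}"
  show ?case
  proof (cases "a m")
    case False
    then have "{i. i < Suc m \<and> a i} = {i. i < m \<and> a i}"
      and "(\<lambda>k. \<exists>i<Suc m. a i \<and> p i = k) = V"
      by (auto simp: less_Suc_eq V_def)
    then show ?thesis using Suc False by (simp add: V_def)
  next
    case True
    have vec: "vadd (unitv (p m)) V = (\<lambda>k. \<exists>i<Suc m. a i \<and> p i = k)"
    proof
      fix k
      have "\<not> (k = p m \<and> V k)" using pinj by (auto simp: V_def dest: injD)
      then show "vadd (unitv (p m)) V k = (\<exists>i<Suc m. a i \<and> p i = k)"
        using True by (auto simp: vadd_def unitv_def V_def less_Suc_eq)
    qed
    have cocycle: "Hcocycle n (unitv (p m)) V = odd (card W)"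
    proof -
      have "{(i, j). i < j \<and> j < n \<and> unitv (p m) i \<and> V j} = (\<lambda>i. (p m, p i)) ` W"
      proof
        show "{(i, j). i < j \<and> j < n \<and> unitv (p m) i \<and> V j} \<subseteq> (\<lambda>i. (p m, p i)) ` W"
          by (auto simp: unitv_def V_def W_def)
        have "p i < n" if "i < n" for i using permutes_in_image[OF p, of i] that by simp
        then show "(\<lambda>i. (p m, p i)) ` W \<subseteq> {(i, j). i < j \<and> j < n \<and> unitv (p m) i \<and> V j}"
          using Suc.prems by (auto simp: unitv_def V_def W_def)
      qed
      moreover have "inj_on (\<lambda>i. (p m, p i)) W" using pinj by (auto simp: inj_on_def dest: injD)
      ultimately show ?thesis by (simp add: Hcocycle_def card_image)
    qed
    have parity: "odd (card (inversions {i. i < Suc m \<and> a i} p)) = (odd (card I) \<noteq> odd (card W))"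
    proof -
      have "inversions {i. i < Suc m \<and> a i} p = I \<union> (\<lambda>i. (i, m)) ` W"
      proof (intro equalityI subsetI)
        fix x assume "x \<in> inversions {i. i < Suc m \<and> a i} p"
        then obtain i j where "x = (i, j)" "i < j" "j < Suc m" "a i" "a j" "p j < p i"
          by (auto simp: inversions_def)
        then show "x \<in> I \<union> (\<lambda>i. (i, m)) ` W"
          by (cases "j = m") (auto simp: I_def W_def inversions_def)
      qed (use True in \<open>auto simp: inversions_def I_def W_def\<close>)
      moreover have "finite I" "finite W" "I \<inter> (\<lambda>i. (i, m)) ` W = {}"
        by (auto simp: I_def W_def inversions_def intro: finite_subset[of _ "{..<m} \<times> {..<m}"])
      ultimately show ?thesis by (simp add: card_Un_disjoint card_image inj_on_def)
    qed
    have "foldl (Hmul n) (zvec, False) (map (\<lambda>i. xgen (p i)) (rev (filter a [0..<Suc m])))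
        = Hmul n (unitv (p m), False) (V, odd (card I))"
      using True Suc foldl_Hmul[of n "Hmul n (zvec, False) (xgen (p m))"]
      by (simp add: xgen_def V_def I_def inversion_parity_def)
    then show ?thesis
      unfolding Hmul_eq fst_conv snd_conv vec cocycle inversion_parity_def parity by simp
  qed
qed

lemma pact_pact_inv [simp]:
  assumes "bij p"
  shows "pact p (pact (inv p) v) = v" "pact (inv p) (pact p v) = v"
  using assms by (simp_all add: pact_def inv_inv_eq bij_is_inj bij_is_surj inv_f_f surj_f_inv_f)

lemma Hact_eq:
  assumes p: "p permutes {..<n}" and a: "\<And>i. n \<le> i \<Longrightarrow> \<not> a i"
  shows "Hact n p (a, b) = (pact p a, b \<noteq> inversion_parity {i. a i} p)"
proof -
  have "{i. i < n \<and> a i} = {i. a i}" using a not_less by blast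
  moreover have "(\<lambda>k. \<exists>i<n. a i \<and> p i = k) = pact p a"
  proof
    fix k
    have "(\<exists>i<n. a i \<and> p i = k) \<longleftrightarrow> (\<exists>i. a i \<and> p i = k)" using a not_less by blast
    also have "\<dots> \<longleftrightarrow> a (inv p k)" using p by (metis permutes_inverses)
    finally show "(\<exists>i<n. a i \<and> p i = k) = pact p a k" by (simp add: pact_def)
  qed
  ultimately show ?thesis
    unfolding Hact_def using foldl_Hmul[of n "(zvec, b)"] foldl_Hmul_xgen[OF p order_refl, of a]
    by (simp add: Hmul_eq)
qed

lemma Hact_one:
  assumes "p permutes {..<n}"
  shows "Hact n p (zvec, False) = (zvec, False)"
proof -
  have "inversions {} p = {}" by (simp add: inversions_def)
  then show ?thesis
    using Hact_eq[OF assms, of zvec False] by (simp add: zvec_def pact_def inversion_parity_def)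
qed

lemma Hact_Hact_inv:
  assumes p: "p permutes {..<n}" and v: "\<And>i. n \<le> i \<Longrightarrow> \<not> v i"
  shows "Hact n p (Hact n (inv p) (v, b)) = (v, b)"
proof -
  have bij: "bij p" using p by (rule permutes_bij)
  have v': "\<not> pact (inv p) v i" if "n \<le> i" for i
    using that v p by (simp add: pact_def inv_inv_eq bij permutes_not_in)
  have "{i. pact (inv p) v i} = inv p ` {i. v i}"
    using bij by (auto simp: pact_def inv_inv_eq bij_vimage_eq_inv_image[symmetric])
  then have "inversion_parity {i. pact (inv p) v i} p = inversion_parity {i. v i} (inv p)"
    using card_inversions_inv[OF bij] by (simp add: inversion_parity_def)
  then show ?thesis
    using Hact_eq[OF permutes_inv[OF p] v, where b=b] Hact_eq[OF p v'] bij by simp blast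
qed

lemma phi_Bperm_eq:
  assumes \<sigma>: "\<sigma> permutes {..<n}" and p: "p permutes {..<n}" and v: "\<And>i. n \<le> i \<Longrightarrow> \<not> v i"
    and comm: "\<sigma> \<circ> p = p \<circ> \<sigma>" and v_inv: "pact \<sigma> v = v"
  shows "phi n (Bperm \<sigma>) (v, p) = ((zvec, inversion_parity {i. v i} \<sigma>), id)"
proof -
  have "Hact n \<sigma> (v, False) = (v, inversion_parity {i. v i} \<sigma>)"
    using Hact_eq[OF \<sigma> v] v_inv by simp
  moreover have "Hinv n (zvec, False) = (zvec, False)" by (simp add: Hinv_def zvec_def)
  moreover have "Hinv n (v, False) = (v, Hcocycle n v v)" by (simp add: Hinv_def Hcocycle_def)
  moreover have "\<sigma> \<circ> p \<circ> inv \<sigma> = p"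
    using comm \<sigma> by (simp add: o_assoc[symmetric] permutes_inv_o)
  moreover have "p \<circ> inv p = id" using p by (simp add: permutes_inv_o)
  ultimately have "phi n (Bperm \<sigma>) (v, p) = (Hmul n (v, inversion_parity {i. v i} \<sigma>) (v, Hcocycle n v v), id)"
    by (simp add: phi_def lift_def Bperm_def Ginv_def Gmul_def Hact_one permutes_inv \<sigma> p
        permutes_compose Hact_Hact_inv v)
  then show ?thesis by (simp add: Hmul_eq) blast
qed

section \<open>The centralizer of a permutation in B_n\<close>

lemma Bmul_Bperm_Bvec: "Bmul (Bperm q) (Bvec w) = (pact q w, q)"
  by (simp add: Bmul_def Bperm_def Bvec_def)

lemma Bmul_Bperm_commute_iff:
  "Bmul (Bperm \<sigma>) (v, p) = Bmul (v, p) (Bperm \<sigma>) \<longleftrightarrow> pact \<sigma> v = v \<and> \<sigma> \<circ> p = p \<circ> \<sigma>"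
  by (simp add: Bmul_def Bperm_def pact_def zvec_def vadd_def fun_eq_iff)

lemma pact_eq_self_iff:
  assumes "bij \<sigma>"
  shows "pact \<sigma> v = v \<longleftrightarrow> (\<forall>k. v (\<sigma> k) = v k)"
  using assms unfolding pact_def fun_eq_iff
  by (metis bij_inv_eq_iff)

lemma invariant_on_orbit:
  assumes "\<And>k. v (\<sigma> k) = v k" and "x \<in> orbit \<sigma> i"
  shows "v x = v i"
  using assms(2) by induction (simp_all add: assms(1))

lemma cycvec_inj:
  assumes "\<forall>C. C \<notin> cycles_of n \<sigma> \<longrightarrow> \<not> lam C" "\<forall>C. C \<notin> cycles_of n \<sigma> \<longrightarrow> \<not> lam' C"
    and "cycvec n \<sigma> lam = cycvec n \<sigma> lam'"
  shows "lam = lam'"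
proof
  fix C
  show "lam C = lam' C"
  proof (cases "C \<in> cycles_of n \<sigma>")
    case True
    then obtain i where i: "i < n" "C = orbit \<sigma> i" by (auto simp: cycles_of_def)
    then have "lam C = cycvec n \<sigma> lam i" by (simp add: cycvec_def)
    also have "\<dots> = cycvec n \<sigma> lam' i" using assms(3) by simp
    also have "\<dots> = lam' C" using i by (simp add: cycvec_def)
    finally show ?thesis .
  qed (use assms in blast)
qed

lemma cycvec_of_invariant:
  assumes \<sigma>: "\<sigma> permutes {..<n}" and w: "\<And>i. n \<le> i \<Longrightarrow> \<not> w i" and w_inv: "\<And>k. w (\<sigma> k) = w k"
  shows "w = cycvec n \<sigma> (\<lambda>C. C \<in> cycles_of n \<sigma> \<and> (\<exists>i\<in>C. w i))"
proof
  have perm: "permutation \<sigma>" using \<sigma> permutation_permutes by blast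
  fix i
  have "(\<exists>j\<in>orbit \<sigma> i. w j) \<longleftrightarrow> w i"
    using invariant_on_orbit[of w \<sigma>, OF w_inv] permutation_self_in_orbit[OF perm, of i] by blast
  then show "w i = cycvec n \<sigma> (\<lambda>C. C \<in> cycles_of n \<sigma> \<and> (\<exists>i\<in>C. w i)) i"
    using w[of i] by (cases "i < n") (auto simp: cycvec_def cycles_of_def)
qed

definition cycle_factorization :: "nat \<Rightarrow> perm \<Rightarrow> vec \<times> perm \<Rightarrow> perm \<Rightarrow> (nat set \<Rightarrow> bool) \<Rightarrow> bool" where
  "cycle_factorization n \<sigma> \<tau> \<tau>' lam \<longleftrightarrow> \<tau>' permutes {..<n} \<and> \<tau>' \<circ> \<sigma> = \<sigma> \<circ> \<tau>'
     \<and> (\<forall>C. C \<notin> cycles_of n \<sigma> \<longrightarrow> \<not> lam C) \<and> \<tau> = Bmul (Bperm \<tau>') (Bvec (cycvec n \<sigma> lam))"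

lemma cycle_factorization_iff:
  assumes "p permutes {..<n}" "\<sigma> \<circ> p = p \<circ> \<sigma>"
  shows "cycle_factorization n \<sigma> (v, p) \<tau>' lam \<longleftrightarrow>
    \<tau>' = p \<and> (\<forall>C. C \<notin> cycles_of n \<sigma> \<longrightarrow> \<not> lam C) \<and> cycvec n \<sigma> lam = pact (inv p) v"
proof -
  have eq: "(v, p) = Bmul (Bperm \<tau>') (Bvec c) \<longleftrightarrow> \<tau>' = p \<and> c = pact (inv p) v" for c
    using pact_pact_inv[OF permutes_bij[OF assms(1)]] by (auto simp: Bmul_Bperm_Bvec)
  show ?thesis
    unfolding cycle_factorization_def eq by (cases "\<tau>' = p") (simp_all add: assms)
qed

lemma ex1_cycle_factorization:
  assumes \<sigma>: "\<sigma> permutes {..<n}" and p: "p permutes {..<n}" and v: "\<And>i. n \<le> i \<Longrightarrow> \<not> v i"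
    and p_comm: "\<sigma> \<circ> p = p \<circ> \<sigma>" and v_inv: "pact \<sigma> v = v"
  shows "\<exists>!(\<tau>', lam). cycle_factorization n \<sigma> (v, p) \<tau>' lam"
proof -
  define w where "w = pact (inv p) v"
  define lam0 where "lam0 C \<longleftrightarrow> C \<in> cycles_of n \<sigma> \<and> (\<exists>i\<in>C. w i)" for C
  have w_eq: "w k = v (p k)" for k using permutes_bij[OF p] by (simp add: w_def pact_def inv_inv_eq)
  have "\<not> w i" if "n \<le> i" for i using that v permutes_not_in[OF p] by (simp add: w_eq)
  moreover have "w (\<sigma> k) = w k" for k
    using v_inv pact_eq_self_iff[OF permutes_bij[OF \<sigma>]] p_comm
    by (simp add: w_eq fun_eq_iff) (metis o_apply)
  ultimately have w_cyc: "cycvec n \<sigma> lam0 = w"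
    unfolding lam0_def by (rule cycvec_of_invariant[OF \<sigma>, symmetric])
  show ?thesis
  proof (rule ex1I[of _ "(p, lam0)"])
    show "case (p, lam0) of (\<tau>', lam) \<Rightarrow> cycle_factorization n \<sigma> (v, p) \<tau>' lam"
      using w_cyc by (simp add: cycle_factorization_iff[OF p p_comm] lam0_def flip: w_def)
  next
    fix x assume "case x of (\<tau>', lam) \<Rightarrow> cycle_factorization n \<sigma> (v, p) \<tau>' lam"
    then obtain lam where x: "x = (p, lam)" and lam: "\<forall>C. C \<notin> cycles_of n \<sigma> \<longrightarrow> \<not> lam C"
      and "cycvec n \<sigma> lam = w"
      by (auto simp: cycle_factorization_iff[OF p p_comm] w_def)
    then have "lam = lam0"
      using w_cyc by (intro cycvec_inj[OF lam]) (auto simp: lam0_def)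
    then show "x = (p, lam0)" by (simp add: x)
  qed
qed

text \<open>The vector part of \<tau> is the image under p of the vector attached to lam, so its
  support is the union of the cycles inv p ` C with lam C; reindexing by inv p preserves lengths.\<close>
lemma phi_cycle_factorization:
  assumes \<sigma>: "\<sigma> permutes {..<n}" and p: "p permutes {..<n}" and v: "\<And>i. n \<le> i \<Longrightarrow> \<not> v i"
    and p_comm: "\<sigma> \<circ> p = p \<circ> \<sigma>" and v_inv: "pact \<sigma> v = v"
    and fact: "cycle_factorization n \<sigma> (v, p) \<tau>' lam"
  shows "phi n (Bperm \<sigma>) (v, p) = Geps (\<Sum>C\<in>cycles_of n \<sigma>. if lam C then card C - 1 else 0)"
proof -
  have perm: "permutation \<sigma>" using \<sigma> permutation_permutes by blast
  have ip: "inv p permutes {..<n}" and ip_comm: "inv p \<circ> \<sigma> = \<sigma> \<circ> inv p"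
    using p p_comm inv_commute[OF p] by (auto simp: permutes_inv)
  have "v = pact p (cycvec n \<sigma> lam)"
    using fact pact_pact_inv[OF permutes_bij[OF p]] by (simp add: cycle_factorization_iff[OF p p_comm])
  also have "\<dots> = cycvec n \<sigma> (\<lambda>C. lam (inv p ` C))"
    using permutes_in_image[OF ip]
    by (simp add: pact_def cycvec_def fun_eq_iff image_orbit_commute[OF perm ip_comm])
  finally have "inversion_parity {i. v i} \<sigma>
      = odd (\<Sum>C\<in>cycles_of n \<sigma>. if lam (inv p ` C) then card C - 1 else 0)"
    by (simp add: inversion_parity_cycvec[OF \<sigma>])
  also have "(\<Sum>C\<in>cycles_of n \<sigma>. if lam (inv p ` C) then card C - 1 else 0)
      = (\<Sum>C\<in>cycles_of n \<sigma>. (\<lambda>C. if lam C then card C - 1 else 0) (inv p ` C))"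
  proof (rule sum.cong)
    fix C
    have "inj_on (inv p) C" using permutes_inj[OF ip] by (rule inj_on_subset) simp
    then show "(if lam (inv p ` C) then card C - 1 else 0)
        = (\<lambda>C. if lam C then card C - 1 else 0) (inv p ` C)"
      by (simp add: card_image)
  qed simp
  also have "\<dots> = (\<Sum>C\<in>cycles_of n \<sigma>. if lam C then card C - 1 else 0)"
    by (rule sum.reindex_bij_betw[OF bij_betw_image_cycles_of[OF \<sigma> ip ip_comm]])
  finally show ?thesis
    by (simp add: phi_Bperm_eq[OF \<sigma> p v p_comm v_inv] Geps_def)
qed

theorem corollary2p4:
  fixes n :: nat and \<sigma> :: perm and \<tau> :: "vec \<times> perm"
  assumes "n \<ge> 1"
    and "\<sigma> permutes {..<n}"
    and "\<tau> \<in> Bcarrier n"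
    and "Bmul (Bperm \<sigma>) \<tau> = Bmul \<tau> (Bperm \<sigma>)"
  shows "(\<exists>!(\<tau>', lam). \<tau>' permutes {..<n} \<and> \<tau>' \<circ> \<sigma> = \<sigma> \<circ> \<tau>'
            \<and> (\<forall>C. C \<notin> cycles_of n \<sigma> \<longrightarrow> \<not> lam C)
            \<and> \<tau> = Bmul (Bperm \<tau>') (Bvec (cycvec n \<sigma> lam)))
       \<and> (\<forall>\<tau>' lam. \<tau>' permutes {..<n} \<and> \<tau>' \<circ> \<sigma> = \<sigma> \<circ> \<tau>'
            \<and> (\<forall>C. C \<notin> cycles_of n \<sigma> \<longrightarrow> \<not> lam C)
            \<and> \<tau> = Bmul (Bperm \<tau>') (Bvec (cycvec n \<sigma> lam))
            \<longrightarrow> phi n (Bperm \<sigma>) \<tau> = Geps (\<Sum>C\<in>cycles_of n \<sigma>. if lam C then card C - 1 else 0))"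
proof -
  obtain v p where \<tau>: "\<tau> = (v, p)" by fastforce
  have p: "p permutes {..<n}" and v: "\<And>i. n \<le> i \<Longrightarrow> \<not> v i"
    using assms(3) by (auto simp: \<tau> Bcarrier_def)
  have v_inv: "pact \<sigma> v = v" and p_comm: "\<sigma> \<circ> p = p \<circ> \<sigma>"
    using assms(4) by (auto simp: \<tau> Bmul_Bperm_commute_iff)
  note centralizer = assms(2) p v p_comm v_inv
  have "\<exists>!(\<tau>', lam). cycle_factorization n \<sigma> \<tau> \<tau>' lam"
    using ex1_cycle_factorization[OF centralizer] by (simp add: \<tau>)
  moreover have "\<forall>\<tau>' lam. cycle_factorization n \<sigma> \<tau> \<tau>' lam \<longrightarrow>
      phi n (Bperm \<sigma>) \<tau> = Geps (\<Sum>C\<in>cycles_of n \<sigma>. if lam C then card C - 1 else 0)"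
    using phi_cycle_factorization[OF centralizer] by (simp add: \<tau>)
  ultimately show ?thesis unfolding cycle_factorization_def by blast
qed

end
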